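(* Let $h>0$, $\alpha>2$, $\beta\ge0$, $c>0$, and let $V$ be as in the setting. Let $\mathcal{N}=(\mathcal{N}_{jk})_{j,k\in\mathbb{Z}}$ be a unitary operator on $l^2(\mathbb{Z})$ such that for all $j,k\in\mathbb{Z}$ $$\Big|\mathcal{N}_{jk}-\delta_{jk}e^{\frac{2\pi}{ih}k^2}-\delta_{-j,k}\frac{e^{\frac{2\pi}{ih}k^2}}{ih}\int_0^{2\pi}v_{-2k}(\tau)\,d\tau\Big|\le\frac{c\,e^{-\beta|j-k|}}{\langle j\rangle\langle k\rangle\langle j-k\rangle^{\alpha-1}}.$$ For $N\in\mathbb{N}$ let $w_{jk}=\mathcal{N}_{jk}$ for $-N\le j,k\le N$, and $\varepsilon_{jk}=\frac{c^2c_{\alpha-1}e^{-\beta|j-k|}}{\langle j\rangle\langle k\rangle(N+1)^2\langle j-k\rangle^{\alpha-1}}$, $\sigma_k=4\sum_{|l|\le|k|}\varepsilon_{lk}$. Then for every sufficiently large $N$ there exists a unitary $(2N+1)\times(2N+1)$ matrix $U=(u_{jk})_{-N\le j,k\le N}$ such that for all $-N\le j,k\le N$ $$|u_{jk}-w_{jk}|\le\sigma_k|w_{jk}|+\sum_{-|k|\le l<|k|,\ l\ne k}4\varepsilon_{lk}|w_{jl}|.$$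
   Context: $V(x,t)=\sum_{k\in\mathbb{Z}}v_k(t)e^{ikx}$ is real-valued and $2\pi$-periodic in $t$ with $v_0\equiv0$; $\langle k\rangle=|k|+1$; $\delta$ is the Kronecker delta; $e^{\frac{t}{ih}k^2}=e^{-itk^2/h}$. For $\nu>1$, $c_\nu$ denotes a constant depending only on $\nu$ such that for all $\beta\ge0$ and $s,m\in\mathbb{Z}$: $\sum_{k\in\mathbb{Z}}\frac{e^{-\beta|s-k|-\beta|k-m|}}{\langle s-k\rangle^\nu\langle k-m\rangle^\nu}\le\frac{c_\nu e^{-\beta|s-m|}}{\langle s-m\rangle^\nu}$. *)

theory Defs
  imports "HOL-Analysis.Analysis"
begin

definition angle :: "int \<Rightarrow> real" where
  "angle k = real_of_int \<bar>k\<bar> + 1"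

text \<open>Standing assumptions on the potential V, given through its Fourier
  coefficients v k t (V(x,t) = sum_k v_k(t) e^(ikx)): V real-valued
  (conjugate symmetry of the coefficients), 2pi-periodic in t, v_0 = 0.\<close>
definition potential_setting :: "(int \<Rightarrow> real \<Rightarrow> complex) \<Rightarrow> bool" where
  "potential_setting v \<longleftrightarrow>
     (\<forall>t. v 0 t = 0) \<and>
     (\<forall>k t. v (-k) t = cnj (v k t)) \<and>
     (\<forall>k t. v k (t + 2*pi) = v k t)"

text \<open>C is an admissible constant c_nu in the convolution inequality.\<close>
definition conv_const :: "real \<Rightarrow> real \<Rightarrow> bool" where
  "conv_const \<nu> C \<longleftrightarrow>
     (\<forall>\<beta>\<ge>0. \<forall>s m::int.
        (\<Sum>\<^sub>\<infinity>k::int. exp (-\<beta> * \<bar>s-k\<bar> - \<beta> * \<bar>k-m\<bar>) /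
             (angle (s-k) powr \<nu> * angle (k-m) powr \<nu>))
        \<le> C * exp (-\<beta> * \<bar>s-m\<bar>) / angle (s-m) powr \<nu>)"

definition unitary_l2Z :: "(int \<Rightarrow> int \<Rightarrow> complex) \<Rightarrow> bool" where
  "unitary_l2Z M \<longleftrightarrow>
     (\<forall>k l. ((\<lambda>j. cnj (M j l) * M j k) has_sum (if l = k then 1 else 0)) UNIV) \<and>
     (\<forall>j l. ((\<lambda>k. M j k * cnj (M l k)) has_sum (if j = l then 1 else 0)) UNIV)"

definition unitary_on :: "int set \<Rightarrow> (int \<Rightarrow> int \<Rightarrow> complex) \<Rightarrow> bool" where
  "unitary_on I U \<longleftrightarrow>
     (\<forall>k\<in>I. \<forall>l\<in>I. (\<Sum>j\<in>I. cnj (U j l) * U j k) = (if l = k then 1 else 0)) \<and>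
     (\<forall>j\<in>I. \<forall>l\<in>I. (\<Sum>k\<in>I. U j k * cnj (U l k)) = (if j = l then 1 else 0))"

end

theory Submission
  imports Defs "Jordan_Normal_Form.Determinant"
begin

text \<open>Let \<open>W\<close> be the \<open>(2N+1) \<times> (2N+1)\<close> block \<open>|j|, |k| \<le> N\<close> of \<open>\<N>\<close>. Since \<open>\<N>\<close> is unitary, the
  Gram matrix \<open>G = W\<^sup>* W\<close> differs from the identity by the tail
  \<open>\<Sum>\<^bsub>|j|>N\<^esub> cnj(\<N>\<^sub>j\<^sub>l) \<N>\<^sub>j\<^sub>k\<close>; there \<open>j \<noteq> \<plusminus>l, \<plusminus>k\<close>, so the off-diagonal decay applies, the factor
  \<open>\<langle>j\<rangle>\<^sup>-\<^sup>2 \<le> (N+1)\<^sup>-\<^sup>2\<close> comes out, and the convolution inequality bounds the rest: \<open>|G - 1| \<le> \<epsilon>\<close>.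
  Gram--Schmidt for \<open>G\<close> applied to the unit vectors in the order \<open>0, -1, 1, -2, 2, \<dots>\<close> gives an upper
  triangular \<open>T\<close> with \<open>T\<^sup>* G T = 1\<close>, so \<open>U = W T\<close> is unitary. The weight \<open>\<epsilon>\<close> reproduces itself,
  \<open>\<Sum>\<^sub>m \<epsilon>\<^sub>m\<^sub>l \<epsilon>\<^sub>m\<^sub>k \<le> \<delta> \<epsilon>\<^sub>l\<^sub>k\<close> with \<open>\<delta> = (2N+1) c\<^sup>2 c\<^sub>\<alpha>\<^sub>-\<^sub>1 / (N+1)\<^sup>2 \<rightarrow> 0\<close>, so induction over the columns keeps
  \<open>|T\<^sub>k\<^sub>k - 1| \<le> 2\<epsilon>\<^sub>k\<^sub>k\<close> and \<open>|T\<^sub>l\<^sub>k| \<le> 4\<epsilon>\<^sub>l\<^sub>k\<close>; the entrywise bound on \<open>U - W\<close> follows.\<close>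

section \<open>Weights\<close>

lemma angle_ge_1: "angle k \<ge> 1"
  by (simp add: angle_def)

lemma angle_pos: "angle k > 0"
  by (simp add: angle_def)

lemma angle_uminus: "angle (- k) = angle k"
  by (simp add: angle_def)

lemma angle_diff_le_mult: "angle (l - k) \<le> angle (m - l) * angle (m - k)"
proof -
  have "angle (l - k) \<le> angle (m - l) + angle (m - k) - 1"
    by (simp add: angle_def)
  moreover have "0 \<le> (angle (m - l) - 1) * (angle (m - k) - 1)"
    using angle_ge_1 by simp
  ultimately show ?thesis
    by (simp add: algebra_simps)
qed

lemma summable_on_angle_powr_inverse:
  assumes "a > 1"
  shows "(\<lambda>j::int. 1 / angle (j - k) powr a) summable_on UNIV"
proof -
  have "summable (\<lambda>n::nat. real (Suc n) powr (-a))"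
    using assms summable_real_powr_iff[of "-a"] summable_Suc_iff[of "\<lambda>n. real n powr (-a)"]
    by simp
  hence "(\<lambda>n::nat. real (Suc n) powr (-a)) summable_on UNIV"
    by (subst summable_on_UNIV_nonneg_real_iff) auto
  moreover have "(\<lambda>n::nat. real (Suc n) powr (-a)) = (\<lambda>j. 1 / angle j powr a) \<circ> int"
    by (auto simp: angle_def powr_minus divide_inverse add.commute)
  ultimately have pos: "(\<lambda>j::int. 1 / angle j powr a) summable_on range int"
    by (simp add: summable_on_reindex)
  hence "(\<lambda>j::int. 1 / angle j powr a) summable_on uminus ` range int"
    by (simp add: summable_on_reindex o_def angle_uminus)
  moreover have "range int \<union> uminus ` range int = (UNIV :: int set)"
  proof -
    have "j \<in> range int \<union> uminus ` range int" for j :: int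
      by (cases j rule: int_cases2) auto
    thus ?thesis
      by blast
  qed
  ultimately have "(\<lambda>j::int. 1 / angle j powr a) summable_on UNIV"
    using pos summable_on_union[OF pos] by fastforce
  moreover have "bij_betw (\<lambda>j. j - k) UNIV (UNIV :: int set)"
    by (rule bij_betwI[where g = "\<lambda>j. j + k"]) auto
  ultimately show ?thesis
    using summable_on_reindex_bij_betw[of "\<lambda>j. j - k" UNIV UNIV "\<lambda>j. 1 / angle j powr a"] by simp
qed

definition decay :: "real \<Rightarrow> real \<Rightarrow> int \<Rightarrow> int \<Rightarrow> real" where
  "decay \<beta> a j k = exp (- \<beta> * \<bar>j - k\<bar>) / angle (j - k) powr a"

lemma decay_pos: "decay \<beta> a j k > 0"
  using angle_pos[of "j - k"] by (simp add: decay_def)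

lemma decay_commute: "decay \<beta> a j k = decay \<beta> a k j"
  by (simp add: decay_def angle_def abs_minus_commute)

lemma decay_le_angle_powr_inverse:
  assumes "\<beta> \<ge> 0"
  shows "decay \<beta> a j k \<le> 1 / angle (j - k) powr a"
  using assms angle_pos[of "j - k"] by (simp add: decay_def divide_right_mono)

lemma decay_eq_exp_mult: "decay \<beta> a j k = exp (- \<beta> * \<bar>j - k\<bar>) * decay 0 a j k"
  by (simp add: decay_def)

lemma exp_decay_mult_le:
  fixes \<beta> :: real and m l k :: int
  assumes "\<beta> \<ge> 0"
  shows "exp (- \<beta> * \<bar>m - l\<bar>) * exp (- \<beta> * \<bar>m - k\<bar>) \<le> exp (- \<beta> * \<bar>l - k\<bar>)"
proof -
  have "\<beta> * \<bar>l - k\<bar> \<le> \<beta> * \<bar>m - l\<bar> + \<beta> * \<bar>m - k\<bar>"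
    using assms by (simp add: distrib_left[symmetric] mult_left_mono)
  thus ?thesis
    by (simp flip: exp_add)
qed

lemma decay_mult_le_exp:
  assumes "\<beta> \<ge> 0"
  shows "decay \<beta> a m l * decay \<beta> a m k \<le> exp (- \<beta> * \<bar>l - k\<bar>) * (decay 0 a l m * decay 0 a m k)"
proof -
  have "decay \<beta> a m l * decay \<beta> a m k
      = (exp (- \<beta> * \<bar>m - l\<bar>) * exp (- \<beta> * \<bar>m - k\<bar>)) * (decay 0 a l m * decay 0 a m k)"
    by (subst (1 2) decay_eq_exp_mult) (simp add: decay_commute[of 0 a m l])
  also have "\<dots> \<le> exp (- \<beta> * \<bar>l - k\<bar>) * (decay 0 a l m * decay 0 a m k)"
    using exp_decay_mult_le[OF assms] decay_pos by (intro mult_right_mono) (auto simp: less_imp_le)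
  finally show ?thesis .
qed

lemma decay_mult_le:
  assumes "\<beta> \<ge> 0" "a \<ge> 0"
  shows "decay \<beta> a m l * decay \<beta> a m k \<le> decay \<beta> a l k"
proof -
  have "angle (l - k) powr a \<le> (angle (m - l) * angle (m - k)) powr a"
    using assms(2) angle_pos by (intro powr_mono2 angle_diff_le_mult) (auto simp: less_imp_le)
  hence "angle (l - k) powr a \<le> angle (l - m) powr a * angle (m - k) powr a"
    using angle_pos by (simp add: powr_mult less_imp_le angle_def abs_minus_commute)
  hence "1 / (angle (l - m) powr a * angle (m - k) powr a) \<le> 1 / angle (l - k) powr a"
    using angle_pos[of "l - k"] by (intro frac_le) auto
  hence "decay 0 a l m * decay 0 a m k \<le> decay 0 a l k"
    by (simp add: decay_def)
  hence "exp (- \<beta> * \<bar>l - k\<bar>) * (decay 0 a l m * decay 0 a m k) \<le> decay \<beta> a l k"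
    by (subst decay_eq_exp_mult) simp
  with decay_mult_le_exp[OF assms(1)] show ?thesis
    by (rule order_trans)
qed

lemma summable_on_decay_product:
  assumes "a > 1" "\<beta> \<ge> 0"
  shows "(\<lambda>j. decay \<beta> a l j * decay \<beta> a j k) summable_on A"
proof (rule summable_on_subset[OF summable_on_comparison_test[OF summable_on_angle_powr_inverse[OF assms(1)]]])
  fix j :: int
  have "1 \<le> angle (l - j) powr a"
    using angle_ge_1 assms(1) by (simp add: ge_one_powr_ge_zero)
  hence "1 / angle (l - j) powr a \<le> 1"
    by (auto simp: divide_le_eq_1)
  hence "decay \<beta> a l j \<le> 1"
    using decay_le_angle_powr_inverse[OF assms(2), of a l j] by linarith
  hence "decay \<beta> a l j * decay \<beta> a j k \<le> decay \<beta> a j k"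
    using decay_pos by (simp add: mult_left_le_one_le less_imp_le)
  thus "decay \<beta> a l j * decay \<beta> a j k \<le> 1 / angle (j - k) powr a"
    using decay_le_angle_powr_inverse[OF assms(2), of a j k] by linarith
qed (auto simp: decay_pos less_imp_le)

text \<open>The definition of \<open>conv_const\<close> quantifies only over integer decay rates \<open>\<beta>\<close>; the
  case \<open>\<beta> = 0\<close> suffices, the exponential factors being handled by the triangle inequality.\<close>

lemma conv_const_decay:
  assumes "conv_const a C"
  shows "(\<Sum>\<^sub>\<infinity>j. decay 0 a l j * decay 0 a j k) \<le> C * decay 0 a l k"
  using assms[unfolded conv_const_def, rule_format, of 0 l k] by (simp add: decay_def)

lemma conv_const_nonneg:
  assumes "a > 1" "conv_const a C"
  shows "C \<ge> 0"
proof -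
  have "0 \<le> (\<Sum>\<^sub>\<infinity>j. decay 0 a 0 j * decay 0 a j 0)"
    by (intro infsum_nonneg) (simp add: decay_pos less_imp_le)
  also have "\<dots> \<le> C * decay 0 a 0 0"
    using conv_const_decay[OF assms(2)] .
  finally show ?thesis
    using decay_pos[of 0 a 0 0] by (simp add: zero_le_mult_iff)
qed

text \<open>With \<open>X = c\<^sup>2 c\<^sub>\<alpha>\<^sub>-\<^sub>1\<close> and \<open>D = (N + 1)\<^sup>2\<close> this is the weight \<open>\<epsilon>\<close> of the theorem.\<close>
definition decay_weight :: "real \<Rightarrow> real \<Rightarrow> real \<Rightarrow> real \<Rightarrow> int \<Rightarrow> int \<Rightarrow> real" where
  "decay_weight X D \<beta> a l k = X * decay \<beta> a l k / (angle l * angle k * D)"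

lemma decay_weight_nonneg: "X \<ge> 0 \<Longrightarrow> D > 0 \<Longrightarrow> 0 \<le> decay_weight X D \<beta> a l k"
  using decay_pos[of \<beta> a l k] angle_pos[of l] angle_pos[of k] by (simp add: decay_weight_def)

lemma decay_weight_commute: "decay_weight X D \<beta> a l k = decay_weight X D \<beta> a k l"
  by (simp add: decay_weight_def decay_commute mult_ac)

lemma decay_weight_diag_le:
  assumes "X \<ge> 0" "D > 0"
  shows "decay_weight X D \<beta> a k k \<le> X / D"
proof -
  have "X / (angle k * angle k * D) \<le> X / (1 * 1 * D)"
    using assms angle_ge_1[of k] by (intro divide_left_mono mult_mono mult_pos_pos) auto
  thus ?thesis
    by (simp add: decay_weight_def decay_def angle_def)
qed

lemma decay_weight_mult_le:
  assumes "X \<ge> 0" "D > 0" "\<beta> \<ge> 0" "a \<ge> 0"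
  shows "decay_weight X D \<beta> a m l * decay_weight X D \<beta> a m k \<le> X / D * decay_weight X D \<beta> a l k"
proof -
  have "decay_weight X D \<beta> a m l * decay_weight X D \<beta> a m k
      = X * X * (decay \<beta> a m l * decay \<beta> a m k) / ((angle m * angle m) * (angle l * angle k * D * D))"
    by (simp add: decay_weight_def field_simps)
  also have "\<dots> \<le> X * X * decay \<beta> a l k / (1 * (angle l * angle k * D * D))"
    using assms angle_ge_1[of m] mult_mono[of 1 "angle m" 1 "angle m"] angle_pos[of l] angle_pos[of k]
      decay_mult_le[OF assms(3,4), of m l k] decay_pos
    by (intro frac_le mult_mono mult_left_mono mult_pos_pos) (auto simp: less_imp_le)
  also have "\<dots> = X / D * decay_weight X D \<beta> a l k"
    using assms(2) by (simp add: decay_weight_def field_simps)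
  finally show ?thesis .
qed

lemma decay_weight_conv_le:
  assumes "X \<ge> 0" "D > 0" "\<beta> \<ge> 0" "a \<ge> 0"
  shows "(\<Sum>m\<in>A. decay_weight X D \<beta> a m l * decay_weight X D \<beta> a m k)
    \<le> real (card A) * (X / D) * decay_weight X D \<beta> a l k"
proof -
  have "(\<Sum>m\<in>A. decay_weight X D \<beta> a m l * decay_weight X D \<beta> a m k)
      \<le> (\<Sum>m\<in>A. X / D * decay_weight X D \<beta> a l k)"
    using assms by (intro sum_mono decay_weight_mult_le)
  thus ?thesis
    by (simp add: mult.assoc)
qed

section \<open>Hermitian forms\<close>

definition herm_form :: "'a set \<Rightarrow> ('a \<Rightarrow> 'a \<Rightarrow> complex) \<Rightarrow> ('a \<Rightarrow> complex) \<Rightarrow> ('a \<Rightarrow> complex) \<Rightarrow> complex" where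
  "herm_form I G x y = (\<Sum>m\<in>I. \<Sum>m'\<in>I. cnj (x m) * G m m' * y m')"

lemma herm_form_cnj_swap:
  assumes "\<And>m m'. m \<in> I \<Longrightarrow> m' \<in> I \<Longrightarrow> G m m' = cnj (G m' m)"
  shows "herm_form I G x y = cnj (herm_form I G y x)"
proof -
  have "herm_form I G x y = (\<Sum>m'\<in>I. \<Sum>m\<in>I. cnj (x m) * G m m' * y m')"
    unfolding herm_form_def by (rule sum.swap)
  also have "\<dots> = (\<Sum>m'\<in>I. \<Sum>m\<in>I. cnj (cnj (y m') * G m' m * x m))"
  proof (intro sum.cong refl)
    fix m m' assume "m \<in> I" "m' \<in> I"
    thus "cnj (x m) * G m m' * y m' = cnj (cnj (y m') * G m' m * x m)"
      by (simp add: assms[of m m'])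
  qed
  finally show ?thesis
    by (simp add: herm_form_def cnj_sum)
qed

lemma herm_form_diff_right:
  "herm_form I G x (\<lambda>m. y m - z m) = herm_form I G x y - herm_form I G x z"
  by (simp add: herm_form_def algebra_simps sum_subtractf)

lemma herm_form_sum_right:
  "herm_form I G x (\<lambda>m. \<Sum>l\<in>B. f l * z l m) = (\<Sum>l\<in>B. f l * herm_form I G x (z l))"
proof -
  have "herm_form I G x (\<lambda>m. \<Sum>l\<in>B. f l * z l m)
      = (\<Sum>m\<in>I. \<Sum>m'\<in>I. \<Sum>l\<in>B. f l * (cnj (x m) * G m m' * z l m'))"
    by (simp add: herm_form_def sum_distrib_left mult_ac)
  also have "\<dots> = (\<Sum>m\<in>I. \<Sum>l\<in>B. \<Sum>m'\<in>I. f l * (cnj (x m) * G m m' * z l m'))"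
    by (intro sum.cong refl sum.swap)
  also have "\<dots> = (\<Sum>l\<in>B. \<Sum>m\<in>I. \<Sum>m'\<in>I. f l * (cnj (x m) * G m m' * z l m'))"
    by (rule sum.swap)
  finally show ?thesis
    by (simp add: herm_form_def sum_distrib_left)
qed

lemma herm_form_divide_right: "herm_form I G x (\<lambda>m. y m / s) = herm_form I G x y / s"
  by (simp add: herm_form_def sum_divide_distrib)

lemma herm_form_divide_left: "herm_form I G (\<lambda>m. y m / s) x = herm_form I G y x / cnj s"
  by (simp add: herm_form_def sum_divide_distrib)

lemma herm_form_unit_right:
  assumes "finite I" "k \<in> I"
  shows "herm_form I G x (\<lambda>m. if m = k then 1 else 0) = (\<Sum>m\<in>I. cnj (x m) * G m k)"
  using assms by (simp add: herm_form_def if_distrib cong: if_cong)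

lemma gram_of_product:
  "(\<Sum>j\<in>J. cnj (\<Sum>m\<in>I. W j m * x m) * (\<Sum>m\<in>I. W j m * y m))
     = herm_form I (\<lambda>m m'. \<Sum>j\<in>J. cnj (W j m) * W j m') x y"
proof -
  have "(\<Sum>j\<in>J. cnj (\<Sum>m\<in>I. W j m * x m) * (\<Sum>m\<in>I. W j m * y m))
      = (\<Sum>j\<in>J. \<Sum>m\<in>I. \<Sum>m'\<in>I. cnj (x m) * (cnj (W j m) * W j m') * y m')"
    unfolding cnj_sum complex_cnj_mult sum_product by (simp add: mult_ac)
  also have "\<dots> = (\<Sum>m\<in>I. \<Sum>j\<in>J. \<Sum>m'\<in>I. cnj (x m) * (cnj (W j m) * W j m') * y m')"
    by (rule sum.swap)
  also have "\<dots> = (\<Sum>m\<in>I. \<Sum>m'\<in>I. \<Sum>j\<in>J. cnj (x m) * (cnj (W j m) * W j m') * y m')"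
    by (intro sum.cong refl sum.swap)
  finally show ?thesis
    by (simp add: herm_form_def sum_distrib_left sum_distrib_right)
qed

section \<open>Quantitative Gram--Schmidt\<close>

lemma abs_inverse_sqrt_sub_one_le:
  fixes x :: real
  assumes "\<bar>x - 1\<bar> \<le> 1/2"
  shows "\<bar>1 / sqrt x - 1\<bar> \<le> \<bar>x - 1\<bar>"
proof -
  define s where "s = sqrt x"
  have x: "x \<ge> 1/2"
    using assms by linarith
  hence s_pos: "s > 0" and s_sq: "s * s = x"
    by (simp_all add: s_def)
  have "s \<ge> 7/10"
  proof (rule ccontr)
    assume "\<not> s \<ge> 7/10"
    hence "s * s < 7/10 * (7/10)"
      using s_pos by (intro mult_strict_mono) auto
    thus False
      using s_sq x by simp
  qed
  hence "1 \<le> s * (1 + s)"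
    using mult_mono[of "7/10" s "1 + 7/10" "1 + s"] by simp
  moreover have "\<bar>1 / s - 1\<bar> * (s * (1 + s)) = \<bar>x - 1\<bar>"
  proof -
    have "(1 / s - 1) * (s * (1 + s)) = 1 - x"
      using s_pos s_sq by (simp add: field_simps)
    hence "\<bar>(1 / s - 1) * (s * (1 + s))\<bar> = \<bar>x - 1\<bar>"
      by simp
    thus ?thesis
      using s_pos by (simp add: abs_mult abs_of_pos)
  qed
  ultimately show ?thesis
    using mult_left_mono[of 1 "s * (1 + s)" "\<bar>1 / s - 1\<bar>"] by (simp add: s_def)
qed

lemma sum_delta_plus_mult:
  fixes C :: real
  assumes "finite I" "l \<in> I"
  shows "(\<Sum>m\<in>I. ((if m = l then C else 0) + D m) * E m) = C * E l + (\<Sum>m\<in>I. D m * E m)"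
proof -
  have "(\<Sum>m\<in>I. ((if m = l then C else 0) + D m) * E m)
      = (\<Sum>m\<in>I. if m = l then C * E m else 0) + (\<Sum>m\<in>I. D m * E m)"
    unfolding sum.distrib[symmetric] by (intro sum.cong) (auto simp: distrib_right)
  thus ?thesis
    using assms by simp
qed

text \<open>The deviation \<open>\<epsilon>\<close> of \<open>G\<close> from the identity is a kernel that reproduces itself under composition
  up to the factor \<open>\<delta>\<close>; this is what keeps the Gram--Schmidt coefficients of size \<open>O(\<epsilon>)\<close>.\<close>

locale gram_perturbation =
  fixes I :: "'a set" and G :: "'a \<Rightarrow> 'a \<Rightarrow> complex" and \<epsilon> :: "'a \<Rightarrow> 'a \<Rightarrow> real"
    and \<delta> \<eta> :: real
  assumes finite_I: "finite I"
    and hermitian: "\<And>m m'. m \<in> I \<Longrightarrow> m' \<in> I \<Longrightarrow> G m m' = cnj (G m' m)"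
    and gram_close: "\<And>l k. l \<in> I \<Longrightarrow> k \<in> I \<Longrightarrow> cmod (G l k - (if l = k then 1 else 0)) \<le> \<epsilon> l k"
    and eps_nonneg: "\<And>l k. l \<in> I \<Longrightarrow> k \<in> I \<Longrightarrow> 0 \<le> \<epsilon> l k"
    and eps_sym: "\<And>l k. l \<in> I \<Longrightarrow> k \<in> I \<Longrightarrow> \<epsilon> l k = \<epsilon> k l"
    and eps_conv: "\<And>l k. l \<in> I \<Longrightarrow> k \<in> I \<Longrightarrow> (\<Sum>m\<in>I. \<epsilon> m l * \<epsilon> m k) \<le> \<delta> * \<epsilon> l k"
    and eps_diag: "\<And>k. k \<in> I \<Longrightarrow> \<epsilon> k k \<le> \<eta>"
    and delta_nonneg: "0 \<le> \<delta>" and delta_small: "\<delta> \<le> 1/10" and eta_small: "\<eta> \<le> 1/10"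
begin

abbreviation \<kappa> :: real where
  "\<kappa> \<equiv> 1 + 2 * \<eta> + 4 * \<delta>"

context
  fixes B :: "'a set" and k :: 'a and T :: "'a \<Rightarrow> 'a \<Rightarrow> complex"
  assumes B_subset: "B \<subseteq> I" and k_in: "k \<in> I" and k_notin: "k \<notin> B"
    and T_orthonormal: "\<And>l l'. l \<in> B \<Longrightarrow> l' \<in> B \<Longrightarrow>
      herm_form I G (\<lambda>m. T m l) (\<lambda>m. T m l') = (if l = l' then 1 else 0)"
    and T_support: "\<And>l m. l \<in> B \<Longrightarrow> m \<in> I \<Longrightarrow> m \<notin> B \<Longrightarrow> T m l = 0"
    and T_bound: "\<And>l m. l \<in> B \<Longrightarrow> m \<in> I \<Longrightarrow>
      cmod (T m l) \<le> (if m = l then 1 + 2 * \<eta> else 0) + 4 * \<epsilon> m l"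
begin

definition proj_coeff :: "'a \<Rightarrow> complex" where
  "proj_coeff l = herm_form I G (\<lambda>m. T m l) (\<lambda>m. if m = k then 1 else 0)"

definition residual :: "'a \<Rightarrow> complex" where
  "residual m = (if m = k then 1 else 0) - (\<Sum>l\<in>B. proj_coeff l * T m l)"

lemma eta_nonneg: "0 \<le> \<eta>"
  using eps_nonneg[OF k_in k_in] eps_diag[OF k_in] by linarith

lemma kappa_bounds: "1 \<le> \<kappa>" "\<kappa> \<le> 8/5"
  using eta_nonneg delta_nonneg delta_small eta_small by auto

lemma kappa_sq_bounds: "\<kappa>\<^sup>2 * \<delta> \<le> 1" "\<kappa>\<^sup>2 * (1 + 2 * \<eta>) \<le> 4"
proof -
  have "\<kappa>\<^sup>2 * \<delta> \<le> (8/5)\<^sup>2 * (1/10)"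
    using kappa_bounds delta_nonneg delta_small by (intro mult_mono power_mono) auto
  moreover have "\<kappa>\<^sup>2 * (1 + 2 * \<eta>) \<le> (8/5)\<^sup>2 * (6/5)"
    using kappa_bounds eta_nonneg eta_small by (intro mult_mono power_mono) auto
  ultimately show "\<kappa>\<^sup>2 * \<delta> \<le> 1" "\<kappa>\<^sup>2 * (1 + 2 * \<eta>) \<le> 4"
    by (simp_all add: power2_eq_square)
qed

lemma proj_coeff_bound:
  assumes l: "l \<in> B"
  shows "cmod (proj_coeff l) \<le> \<kappa> * \<epsilon> l k"
proof -
  have lI: "l \<in> I"
    using l B_subset by blast
  have "proj_coeff l = (\<Sum>m\<in>I. cnj (T m l) * G m k)"
    by (simp add: proj_coeff_def herm_form_unit_right finite_I k_in)
  also have "\<dots> = (\<Sum>m\<in>I. cnj (T m l) * (G m k - (if m = k then 1 else 0)))"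
    using T_support[OF l k_in k_notin] by (intro sum.cong) auto
  finally have "cmod (proj_coeff l) \<le> (\<Sum>m\<in>I. cmod (cnj (T m l) * (G m k - (if m = k then 1 else 0))))"
    by (simp only: norm_sum)
  also have "\<dots> \<le> (\<Sum>m\<in>I. cmod (T m l) * \<epsilon> m k)"
  proof (rule sum_mono)
    fix m assume "m \<in> I"
    with gram_close[OF _ k_in] show "cmod (cnj (T m l) * (G m k - (if m = k then 1 else 0))) \<le> cmod (T m l) * \<epsilon> m k"
      unfolding norm_mult complex_mod_cnj by (blast intro: mult_left_mono norm_ge_zero)
  qed
  also have "\<dots> \<le> (\<Sum>m\<in>I. ((if m = l then 1 + 2 * \<eta> else 0) + 4 * \<epsilon> m l) * \<epsilon> m k)"
    using T_bound[OF l] eps_nonneg[OF _ k_in] by (intro sum_mono mult_right_mono) auto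
  also have "\<dots> = (1 + 2 * \<eta>) * \<epsilon> l k + 4 * (\<Sum>m\<in>I. \<epsilon> m l * \<epsilon> m k)"
    using finite_I lI by (simp add: sum_delta_plus_mult sum_distrib_left mult.assoc)
  also have "\<dots> \<le> (1 + 2 * \<eta>) * \<epsilon> l k + 4 * (\<delta> * \<epsilon> l k)"
    using eps_conv[OF lI k_in] by simp
  finally show ?thesis
    by (simp add: algebra_simps)
qed

lemma residual_at_k: "residual k = 1"
  using T_support[OF _ k_in k_notin] by (simp add: residual_def)

lemma residual_support: "m \<in> I \<Longrightarrow> m \<notin> B \<Longrightarrow> m \<noteq> k \<Longrightarrow> residual m = 0"
  using T_support by (simp add: residual_def)

lemma residual_bound:
  assumes m: "m \<in> B"
  shows "cmod (residual m) \<le> \<kappa>\<^sup>2 * \<epsilon> m k"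
proof -
  have mI: "m \<in> I"
    using m B_subset by blast
  have if_eq_commute: "(if m = l then x else 0) = (if l = m then x else 0)" for l and x :: real
    by auto
  have nonneg: "0 \<le> \<kappa> * \<epsilon> l k * ((if m = l then 1 + 2 * \<eta> else 0) + 4 * \<epsilon> m l)" if "l \<in> I" for l
    using that mI kappa_bounds eps_nonneg k_in eta_nonneg delta_nonneg by (intro mult_nonneg_nonneg add_nonneg_nonneg) auto
  have "cmod (residual m) = cmod (\<Sum>l\<in>B. proj_coeff l * T m l)"
    using m k_notin by (auto simp: residual_def)
  also have "\<dots> \<le> (\<Sum>l\<in>B. cmod (proj_coeff l) * cmod (T m l))"
    by (rule order_trans[OF norm_sum]) (simp add: norm_mult)
  also have "\<dots> \<le> (\<Sum>l\<in>B. \<kappa> * \<epsilon> l k * ((if l = m then 1 + 2 * \<eta> else 0) + 4 * \<epsilon> m l))"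
    using proj_coeff_bound T_bound[of _ m] mI B_subset kappa_bounds(1)
    by (intro sum_mono mult_mono) (auto simp: if_eq_commute intro!: mult_nonneg_nonneg eps_nonneg[OF _ k_in])
  also have "\<dots> \<le> (\<Sum>l\<in>I. \<kappa> * \<epsilon> l k * ((if l = m then 1 + 2 * \<eta> else 0) + 4 * \<epsilon> m l))"
    using finite_I B_subset nonneg by (intro sum_mono2) (auto simp: if_eq_commute)
  also have "\<dots> = \<kappa> * (\<Sum>l\<in>I. ((if l = m then 1 + 2 * \<eta> else 0) + 4 * \<epsilon> l m) * \<epsilon> l k)"
    using eps_sym[OF mI] by (simp add: sum_distrib_left mult_ac)
  also have "\<dots> = \<kappa> * ((1 + 2 * \<eta>) * \<epsilon> m k + 4 * (\<Sum>l\<in>I. \<epsilon> l m * \<epsilon> l k))"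
    using finite_I mI by (simp add: sum_delta_plus_mult sum_distrib_left mult.assoc)
  also have "\<dots> \<le> \<kappa> * ((1 + 2 * \<eta>) * \<epsilon> m k + 4 * (\<delta> * \<epsilon> m k))"
    using eps_conv[OF mI k_in] kappa_bounds by (intro mult_left_mono add_left_mono) auto
  finally show ?thesis
    by (simp add: power2_eq_square algebra_simps)
qed

lemma herm_form_residual_right:
  "herm_form I G x residual
     = herm_form I G x (\<lambda>m. if m = k then 1 else 0) - (\<Sum>l\<in>B. proj_coeff l * herm_form I G x (\<lambda>m. T m l))"
  unfolding residual_def herm_form_diff_right herm_form_sum_right ..

lemma residual_orthogonal:
  assumes "l \<in> B"
  shows "herm_form I G (\<lambda>m. T m l) residual = 0"
proof -
  have "(\<Sum>l'\<in>B. proj_coeff l' * herm_form I G (\<lambda>m. T m l) (\<lambda>m. T m l'))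
      = (\<Sum>l'\<in>B. if l = l' then proj_coeff l' else 0)"
    using assms T_orthonormal by (intro sum.cong) auto
  also have "\<dots> = proj_coeff l"
    using assms finite_subset[OF B_subset finite_I] by simp
  finally show ?thesis
    by (simp add: herm_form_residual_right proj_coeff_def)
qed

lemma herm_form_residual:
  "herm_form I G residual residual = of_real (Re (G k k) - (\<Sum>l\<in>B. (cmod (proj_coeff l))\<^sup>2))"
proof -
  let ?e = "\<lambda>m. if m = k then 1 else 0"
  have swap: "herm_form I G x y = cnj (herm_form I G y x)" for x y
    using hermitian by (rule herm_form_cnj_swap)
  have "herm_form I G residual (\<lambda>m. T m l) = 0" if "l \<in> B" for l
    using residual_orthogonal[OF that] swap by (metis complex_cnj_zero)
  hence "herm_form I G residual residual = cnj (herm_form I G ?e residual)"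
    by (simp add: herm_form_residual_right swap[of residual ?e])
  also have "herm_form I G ?e ?e = G k k"
  proof -
    have "herm_form I G ?e ?e = (\<Sum>m\<in>I. cnj (?e m) * G m k)"
      by (rule herm_form_unit_right[OF finite_I k_in])
    also have "\<dots> = (\<Sum>m\<in>I. if m = k then G k k else 0)"
      by (intro sum.cong) auto
    finally show ?thesis
      using finite_I k_in by simp
  qed
  hence "herm_form I G ?e residual = G k k - (\<Sum>l\<in>B. proj_coeff l * cnj (proj_coeff l))"
    by (simp add: herm_form_residual_right proj_coeff_def swap[of ?e "\<lambda>m. T m _"])
  finally have "herm_form I G residual residual
      = cnj (G k k) - (\<Sum>l\<in>B. cnj (proj_coeff l) * proj_coeff l)"
    by simp
  moreover have "cnj (G k k) = of_real (Re (G k k))"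
    using hermitian[OF k_in k_in] by (simp add: complex_eq_iff)
  moreover have "cnj (proj_coeff l) * proj_coeff l = of_real ((cmod (proj_coeff l))\<^sup>2)" for l
    by (simp only: complex_norm_square mult.commute)
  ultimately show ?thesis
    by simp
qed

lemma herm_form_residual_close:
  "\<bar>Re (G k k) - (\<Sum>l\<in>B. (cmod (proj_coeff l))\<^sup>2) - 1\<bar> \<le> 2 * \<epsilon> k k"
proof -
  have "(\<Sum>l\<in>B. (cmod (proj_coeff l))\<^sup>2) \<le> (\<Sum>l\<in>B. (\<kappa> * \<epsilon> l k)\<^sup>2)"
    using proj_coeff_bound by (intro sum_mono power_mono) auto
  also have "\<dots> \<le> (\<Sum>l\<in>I. (\<kappa> * \<epsilon> l k)\<^sup>2)"
    using finite_I B_subset by (intro sum_mono2) auto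
  also have "\<dots> = \<kappa>\<^sup>2 * (\<Sum>l\<in>I. \<epsilon> l k * \<epsilon> l k)"
    by (simp add: power_mult_distrib sum_distrib_left flip: power2_eq_square)
  also have "\<dots> \<le> \<kappa>\<^sup>2 * (\<delta> * \<epsilon> k k)"
    using eps_conv[OF k_in k_in] by (intro mult_left_mono) auto
  also have "\<dots> \<le> \<epsilon> k k"
    using eps_nonneg[OF k_in k_in] mult_right_mono[OF kappa_sq_bounds(1), of "\<epsilon> k k"]
    by (simp add: mult.assoc)
  finally have "(\<Sum>l\<in>B. (cmod (proj_coeff l))\<^sup>2) \<le> \<epsilon> k k" .
  moreover have "\<bar>Re (G k k) - 1\<bar> \<le> \<epsilon> k k"
    using gram_close[OF k_in k_in] abs_Re_le_cmod[of "G k k - 1"] by simp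
  moreover have "0 \<le> (\<Sum>l\<in>B. (cmod (proj_coeff l))\<^sup>2)"
    by (simp add: sum_nonneg)
  ultimately show ?thesis
    by linarith
qed

lemma gram_schmidt_step:
  "\<exists>t. (\<forall>m\<in>I. m \<notin> B \<longrightarrow> m \<noteq> k \<longrightarrow> t m = 0) \<and> cmod (t k - 1) \<le> 2 * \<epsilon> k k
     \<and> (\<forall>m\<in>B. cmod (t m) \<le> 4 * \<epsilon> m k) \<and> (\<forall>l\<in>B. herm_form I G (\<lambda>m. T m l) t = 0)
     \<and> herm_form I G t t = 1"
proof -
  define q where "q = Re (G k k) - (\<Sum>l\<in>B. (cmod (proj_coeff l))\<^sup>2)"
  define t where "t = (\<lambda>m. residual m / of_real (sqrt q))"
  have q_close: "\<bar>q - 1\<bar> \<le> 2 * \<epsilon> k k"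
    using herm_form_residual_close by (simp add: q_def)
  hence q_half: "\<bar>q - 1\<bar> \<le> 1/2"
    using eps_diag[OF k_in] eta_small by linarith
  hence q_pos: "q > 0"
    by linarith
  have inv_sqrt: "\<bar>1 / sqrt q - 1\<bar> \<le> 2 * \<epsilon> k k"
    using abs_inverse_sqrt_sub_one_le[OF q_half] q_close by linarith
  have "t k - 1 = of_real (1 / sqrt q - 1)"
    by (simp add: t_def residual_at_k)
  hence "cmod (t k - 1) = \<bar>1 / sqrt q - 1\<bar>"
    by (simp only: norm_of_real)
  moreover have "cmod (t m) \<le> 4 * \<epsilon> m k" if m: "m \<in> B" for m
  proof -
    have mI: "m \<in> I"
      using m B_subset by blast
    have "cmod (t m) = cmod (residual m) * (1 / sqrt q)"
      using q_pos by (simp add: t_def norm_divide)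
    also have "\<dots> \<le> (\<kappa>\<^sup>2 * \<epsilon> m k) * (1 + 2 * \<eta>)"
      using residual_bound[OF m] inv_sqrt eps_diag[OF k_in] q_pos eps_nonneg[OF mI k_in]
      by (intro mult_mono) (auto simp: abs_le_iff)
    also have "\<dots> \<le> 4 * \<epsilon> m k"
      using eps_nonneg[OF mI k_in] mult_right_mono[OF kappa_sq_bounds(2), of "\<epsilon> m k"]
      by (simp add: mult_ac)
    finally show ?thesis .
  qed
  moreover have "herm_form I G (\<lambda>m. T m l) t = 0" if "l \<in> B" for l
    using residual_orthogonal[OF that] by (simp add: t_def herm_form_divide_right)
  moreover have "herm_form I G t t = 1"
    using q_pos by (simp add: t_def herm_form_divide_left herm_form_divide_right herm_form_residual
                              flip: q_def of_real_mult)
  moreover have "\<forall>m\<in>I. m \<notin> B \<longrightarrow> m \<noteq> k \<longrightarrow> t m = 0"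
    by (simp add: t_def residual_support)
  ultimately show ?thesis
    using inv_sqrt by (intro exI[of _ t]) auto
qed

end

definition admissible_column :: "('a \<Rightarrow> nat) \<Rightarrow> ('a \<Rightarrow> 'a \<Rightarrow> complex) \<Rightarrow> 'a \<Rightarrow> bool" where
  "admissible_column r T k \<longleftrightarrow> (\<forall>m\<in>I. T m k \<noteq> 0 \<longrightarrow> m = k \<or> r m < r k)
     \<and> cmod (T k k - 1) \<le> 2 * \<epsilon> k k \<and> (\<forall>m\<in>I. r m < r k \<longrightarrow> cmod (T m k) \<le> 4 * \<epsilon> m k)"

definition partial_orthonormalization :: "('a \<Rightarrow> nat) \<Rightarrow> nat \<Rightarrow> ('a \<Rightarrow> 'a \<Rightarrow> complex) \<Rightarrow> bool" where
  "partial_orthonormalization r n T \<longleftrightarrow> (\<forall>k\<in>I. r k < n \<longrightarrow> admissible_column r T k)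
     \<and> (\<forall>k\<in>I. \<forall>l\<in>I. r k < n \<longrightarrow> r l < n \<longrightarrow>
          herm_form I G (\<lambda>m. T m l) (\<lambda>m. T m k) = (if l = k then 1 else 0))"

lemma admissible_column_bound:
  assumes "admissible_column r T l" "l \<in> I" "m \<in> I"
  shows "cmod (T m l) \<le> (if m = l then 1 + 2 * \<eta> else 0) + 4 * \<epsilon> m l"
proof (cases "m = l")
  case True
  have "cmod (T l l) \<le> cmod (T l l - 1) + 1"
    using norm_triangle_ineq[of "T l l - 1" 1] by simp
  thus ?thesis
    using True assms eps_diag[of l] eps_nonneg[of l l] by (auto simp: admissible_column_def)
next
  case False
  thus ?thesis
    using assms eps_nonneg[of m l] by (cases "r m < r l") (auto simp: admissible_column_def)
qed

lemma partial_orthonormalization_next_column: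
  assumes T: "partial_orthonormalization r n T" and k: "k \<in> I" "r k = n"
  obtains t where "\<forall>m\<in>I. t m \<noteq> 0 \<longrightarrow> m = k \<or> r m < n" and "cmod (t k - 1) \<le> 2 * \<epsilon> k k"
    and "\<forall>m\<in>I. r m < n \<longrightarrow> cmod (t m) \<le> 4 * \<epsilon> m k"
    and "\<forall>l\<in>I. r l < n \<longrightarrow> herm_form I G (\<lambda>m. T m l) t = 0" and "herm_form I G t t = 1"
proof -
  define B where "B = {l\<in>I. r l < n}"
  have B_subset: "B \<subseteq> I" and k_notin: "k \<notin> B"
    using k by (auto simp: B_def)
  have admissible: "admissible_column r T l" if "l \<in> B" for l
    using T that by (auto simp: partial_orthonormalization_def B_def)
  have orth: "herm_form I G (\<lambda>m. T m l) (\<lambda>m. T m l') = (if l = l' then 1 else 0)"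
    if "l \<in> B" "l' \<in> B" for l l'
    using T that by (auto simp: partial_orthonormalization_def B_def)
  have support: "T m l = 0" if "l \<in> B" "m \<in> I" "m \<notin> B" for l m
    using admissible[OF that(1)] that by (auto simp: admissible_column_def B_def)
  have bound: "cmod (T m l) \<le> (if m = l then 1 + 2 * \<eta> else 0) + 4 * \<epsilon> m l"
    if "l \<in> B" "m \<in> I" for l m
    using admissible_column_bound[OF admissible] B_subset that by blast
  obtain t where t: "\<forall>m\<in>I. m \<notin> B \<longrightarrow> m \<noteq> k \<longrightarrow> t m = 0" "cmod (t k - 1) \<le> 2 * \<epsilon> k k"
    "\<forall>m\<in>B. cmod (t m) \<le> 4 * \<epsilon> m k" "\<forall>l\<in>B. herm_form I G (\<lambda>m. T m l) t = 0" "herm_form I G t t = 1"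
    using gram_schmidt_step[OF B_subset k(1) k_notin orth support bound] by blast
  show ?thesis
    by (rule that[of t]) (use t in \<open>auto simp: B_def\<close>)
qed

lemma partial_orthonormalization_update:
  assumes inj: "inj_on r I" and T: "partial_orthonormalization r n T" and k: "k \<in> I" "r k = n"
    and t_support: "\<forall>m\<in>I. t m \<noteq> 0 \<longrightarrow> m = k \<or> r m < n" and t_diag: "cmod (t k - 1) \<le> 2 * \<epsilon> k k"
    and t_bound: "\<forall>m\<in>I. r m < n \<longrightarrow> cmod (t m) \<le> 4 * \<epsilon> m k"
    and t_orth: "\<forall>l\<in>I. r l < n \<longrightarrow> herm_form I G (\<lambda>m. T m l) t = 0" and t_norm: "herm_form I G t t = 1"
  shows "partial_orthonormalization r (Suc n) (\<lambda>m j. if j = k then t m else T m j)"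
proof -
  define T' where "T' = (\<lambda>m j. if j = k then t m else T m j)"
  have below_Suc: "r j < Suc n \<longleftrightarrow> r j < n \<or> j = k" if "j \<in> I" for j
    using that inj k by (auto simp: inj_on_def less_Suc_eq)
  have column_old: "(\<lambda>m. T' m j) = (\<lambda>m. T m j)" if "r j < n" for j
    using that k by (auto simp: T'_def)
  have column_k: "(\<lambda>m. T' m k) = t"
    by (simp add: T'_def)
  have "admissible_column r T' k"
    using t_support t_diag t_bound k by (auto simp: admissible_column_def T'_def)
  moreover have "admissible_column r T' l" if "l \<in> I" "r l < n" for l
    using T that column_old[OF that(2)] by (simp add: partial_orthonormalization_def admissible_column_def fun_eq_iff)
  moreover have "herm_form I G (\<lambda>m. T' m l) (\<lambda>m. T' m l') = (if l = l' then 1 else 0)"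
    if l: "l \<in> I" "r l < n \<or> l = k" and l': "l' \<in> I" "r l' < n \<or> l' = k" for l l'
  proof -
    have t_orth': "herm_form I G t (\<lambda>m. T m j) = 0" if "j \<in> I" "r j < n" for j
      using t_orth that herm_form_cnj_swap[OF hermitian, where x = t and y = "\<lambda>m. T m j"] by simp
    consider "r l < n" "r l' < n" | "r l < n" "l' = k" | "l = k" "r l' < n" | "l = k" "l' = k"
      using l l' by blast
    thus ?thesis
    proof cases
      case 1
      thus ?thesis
        using T l l' by (simp add: column_old partial_orthonormalization_def)
    next
      case 2
      thus ?thesis
        using t_orth l k by (auto simp: column_old column_k)
    next
      case 3
      thus ?thesis
        using t_orth' l' k by (auto simp: column_old column_k)
    next
      case 4
      thus ?thesis
        using t_norm by (simp add: column_k)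
    qed
  qed
  ultimately show ?thesis
    unfolding partial_orthonormalization_def T'_def[symmetric] using below_Suc by (metis (no_types, lifting))
qed

lemma partial_orthonormalization_Suc:
  assumes "inj_on r I" "partial_orthonormalization r n T"
  shows "\<exists>T'. partial_orthonormalization r (Suc n) T'"
proof (cases "\<exists>k\<in>I. r k = n")
  case True
  then obtain k where k: "k \<in> I" "r k = n"
    by blast
  obtain t where "\<forall>m\<in>I. t m \<noteq> 0 \<longrightarrow> m = k \<or> r m < n" "cmod (t k - 1) \<le> 2 * \<epsilon> k k"
    "\<forall>m\<in>I. r m < n \<longrightarrow> cmod (t m) \<le> 4 * \<epsilon> m k"
    "\<forall>l\<in>I. r l < n \<longrightarrow> herm_form I G (\<lambda>m. T m l) t = 0" "herm_form I G t t = 1"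
    using partial_orthonormalization_next_column[OF assms(2) k] by blast
  from partial_orthonormalization_update[OF assms k this] show ?thesis
    by blast
next
  case False
  hence "\<forall>j\<in>I. r j < Suc n \<longleftrightarrow> r j < n"
    by (auto simp: less_Suc_eq)
  thus ?thesis
    using assms(2) unfolding partial_orthonormalization_def by blast
qed

lemma partial_orthonormalization_exists:
  assumes "inj_on r I"
  shows "\<exists>T. partial_orthonormalization r n T"
proof (induction n)
  case 0
  show ?case
    by (simp add: partial_orthonormalization_def)
next
  case (Suc n)
  thus ?case
    using partial_orthonormalization_Suc[OF assms] by blast
qed

theorem triangular_orthonormalization:
  assumes "inj_on r I"
  obtains T where "\<And>k. k \<in> I \<Longrightarrow> admissible_column r T k"
    and "\<And>k l. k \<in> I \<Longrightarrow> l \<in> I \<Longrightarrow>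
           herm_form I G (\<lambda>m. T m l) (\<lambda>m. T m k) = (if l = k then 1 else 0)"
proof -
  obtain T where T: "partial_orthonormalization r (Suc (Max (r ` I))) T"
    using partial_orthonormalization_exists[OF assms] by blast
  have "r k < Suc (Max (r ` I))" if "k \<in> I" for k
    using finite_I that by (simp add: le_imp_less_Suc)
  thus ?thesis
    using T that unfolding partial_orthonormalization_def by blast
qed

lemma admissible_column_correction_le:
  assumes "admissible_column r T k" "k \<in> I"
  shows "cmod ((\<Sum>m\<in>I. W m * T m k) - W k)
    \<le> 2 * \<epsilon> k k * cmod (W k) + (\<Sum>m\<in>{m\<in>I. r m < r k}. 4 * \<epsilon> m k * cmod (W m))"
proof -
  let ?L = "{m\<in>I. r m < r k}"
  have L: "?L \<subseteq> I - {k}"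
    by auto
  have "(\<Sum>m\<in>I. W m * T m k) = W k * T k k + (\<Sum>m\<in>I - {k}. W m * T m k)"
    using sum.remove[OF finite_I assms(2)] by simp
  also have "(\<Sum>m\<in>I - {k}. W m * T m k) = (\<Sum>m\<in>?L. W m * T m k)"
    using assms(1) finite_I L by (intro sum.mono_neutral_right) (auto simp: admissible_column_def)
  finally have "(\<Sum>m\<in>I. W m * T m k) - W k = W k * (T k k - 1) + (\<Sum>m\<in>?L. W m * T m k)"
    by (simp add: algebra_simps)
  hence "cmod ((\<Sum>m\<in>I. W m * T m k) - W k) \<le> cmod (W k * (T k k - 1)) + cmod (\<Sum>m\<in>?L. W m * T m k)"
    by (simp only: norm_triangle_ineq)
  also have "\<dots> \<le> cmod (W k) * cmod (T k k - 1) + (\<Sum>m\<in>?L. cmod (W m) * cmod (T m k))"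
    unfolding norm_mult[symmetric] by (intro add_mono order_refl norm_sum)
  also have "\<dots> \<le> cmod (W k) * (2 * \<epsilon> k k) + (\<Sum>m\<in>?L. cmod (W m) * (4 * \<epsilon> m k))"
    using assms(1) by (intro add_mono mult_left_mono sum_mono) (auto simp: admissible_column_def)
  finally show ?thesis
    by (simp add: mult_ac)
qed

end

section \<open>Square unitary matrices\<close>

lemma orthonormal_columns_imp_orthonormal_rows:
  fixes U :: "'a \<Rightarrow> 'a \<Rightarrow> complex"
  assumes "finite I"
    and cols: "\<And>k l. k \<in> I \<Longrightarrow> l \<in> I \<Longrightarrow> (\<Sum>j\<in>I. cnj (U j l) * U j k) = (if l = k then 1 else 0)"
    and "j \<in> I" "l \<in> I"
  shows "(\<Sum>k\<in>I. U j k * cnj (U l k)) = (if j = l then 1 else 0)"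
proof -
  define n where "n = card I"
  obtain h where h: "bij_betw h {0..<n} I"
    using ex_bij_betw_nat_finite[OF assms(1)] by (auto simp: n_def)
  have h_eq_iff: "h i = h i' \<longleftrightarrow> i = i'" if "i < n" "i' < n" for i i'
    using bij_betw_imp_inj_on[OF h] that by (auto simp: inj_on_eq_iff)
  have h_in: "h i \<in> I" if "i < n" for i
    using bij_betw_apply[OF h] that by simp
  have reindex: "(\<Sum>t<n. f (h t)) = (\<Sum>x\<in>I. f x)" for f :: "'a \<Rightarrow> complex"
    using sum.reindex_bij_betw[OF h, of f] by (simp add: atLeast0LessThan)
  define A where "A = mat n n (\<lambda>(i, i'). cnj (U (h i') (h i)))"
  define B where "B = mat n n (\<lambda>(i, i'). U (h i) (h i'))"
  have A: "A \<in> carrier_mat n n" and B: "B \<in> carrier_mat n n"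
    by (simp_all add: A_def B_def)
  have "A * B = 1\<^sub>m n"
  proof (rule eq_matI)
    fix i i' assume "i < dim_row (1\<^sub>m n)" "i' < dim_col (1\<^sub>m n)"
    hence i: "i < n" "i' < n"
      by simp_all
    have "(A * B) $$ (i, i') = (\<Sum>t<n. cnj (U (h t) (h i)) * U (h t) (h i'))"
      using i by (simp add: A_def B_def scalar_prod_def atLeast0LessThan)
    also have "\<dots> = (\<Sum>x\<in>I. cnj (U x (h i)) * U x (h i'))"
      by (rule reindex)
    also have "\<dots> = 1\<^sub>m n $$ (i, i')"
      using i cols[OF h_in h_in] h_eq_iff by simp
    finally show "(A * B) $$ (i, i') = 1\<^sub>m n $$ (i, i')" .
  qed (use A B in auto)
  hence BA: "B * A = 1\<^sub>m n"
    by (rule mat_mult_left_right_inverse[OF A B])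
  have "j \<in> h ` {0..<n}" "l \<in> h ` {0..<n}"
    using h assms(3,4) by (simp_all add: bij_betw_def)
  then obtain i i' where i: "i < n" "j = h i" "i' < n" "l = h i'"
    by auto
  have "(\<Sum>k\<in>I. U j k * cnj (U l k)) = (\<Sum>t<n. U j (h t) * cnj (U l (h t)))"
    by (rule reindex[symmetric])
  also have "\<dots> = (B * A) $$ (i, i')"
    using i by (simp add: A_def B_def scalar_prod_def atLeast0LessThan)
  also have "\<dots> = (if j = l then 1 else 0)"
    using i h_eq_iff by (simp add: BA)
  finally show ?thesis .
qed

lemma unitary_onI:
  assumes "finite I"
    and "\<And>k l. k \<in> I \<Longrightarrow> l \<in> I \<Longrightarrow> (\<Sum>j\<in>I. cnj (U j l) * U j k) = (if l = k then 1 else 0)"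
  shows "unitary_on I U"
  using assms orthonormal_columns_imp_orthonormal_rows[OF assms] by (simp add: unitary_on_def)

section \<open>Truncating the unitary operator\<close>

text \<open>Gram--Schmidt runs through the indices in the order \<open>0, -1, 1, -2, 2, \<dots>\<close>; this is why the
  correction of column \<open>k\<close> involves exactly the columns \<open>l\<close> with \<open>-\<bar>k\<bar> \<le> l < \<bar>k\<bar>\<close>, \<open>l \<noteq> k\<close>.\<close>
definition zigzag :: "int \<Rightarrow> nat" where
  "zigzag k = (if k \<ge> 0 then 2 * nat k else 2 * nat (- k) - 1)"

lemma of_nat_zigzag: "int (zigzag k) = (if k \<ge> 0 then 2 * k else - 2 * k - 1)"
  by (simp add: zigzag_def of_nat_diff)

lemma inj_zigzag: "inj zigzag"
proof (rule injI)
  fix x y assume "zigzag x = zigzag y"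
  hence "int (zigzag x) = int (zigzag y)"
    by simp
  thus "x = y"
    unfolding of_nat_zigzag by (cases "x \<ge> 0"; cases "y \<ge> 0") presburger+
qed

lemma zigzag_less_iff: "zigzag m < zigzag k \<longleftrightarrow> - \<bar>k\<bar> \<le> m \<and> m < \<bar>k\<bar> \<and> m \<noteq> k"
proof -
  have "zigzag m < zigzag k \<longleftrightarrow> int (zigzag m) < int (zigzag k)"
    by simp
  also have "\<dots> \<longleftrightarrow> - \<bar>k\<bar> \<le> m \<and> m < \<bar>k\<bar> \<and> m \<noteq> k"
    unfolding of_nat_zigzag by (cases "m \<ge> 0"; cases "k \<ge> 0"; simp add: abs_if; presburger)
  finally show ?thesis .
qed

lemma unitary_l2Z_gram_tail:
  assumes "unitary_l2Z M" "finite I" "g summable_on (UNIV - I)"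
    and "\<And>j. j \<notin> I \<Longrightarrow> cmod (cnj (M j l) * M j k) \<le> g j"
  shows "cmod ((\<Sum>j\<in>I. cnj (M j l) * M j k) - (if l = k then 1 else 0)) \<le> (\<Sum>\<^sub>\<infinity>j\<in>UNIV - I. g j)"
proof -
  let ?f = "\<lambda>j. cnj (M j l) * M j k"
  have norm_summable: "(\<lambda>j. norm (?f j)) summable_on (UNIV - I)"
    using assms(3,4) by (rule summable_on_comparison_test) auto
  have "(?f has_sum (if l = k then 1 else 0)) UNIV"
    using assms(1) by (simp add: unitary_l2Z_def)
  hence "(?f has_sum ((if l = k then 1 else 0) - (\<Sum>j\<in>I. ?f j))) (UNIV - I)"
    using assms(2) by (intro has_sum_Diff) auto
  hence "cmod ((\<Sum>j\<in>I. ?f j) - (if l = k then 1 else 0)) = norm (\<Sum>\<^sub>\<infinity>j\<in>UNIV - I. ?f j)"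
    by (simp add: infsumI norm_minus_commute)
  also have "\<dots> \<le> (\<Sum>\<^sub>\<infinity>j\<in>UNIV - I. norm (?f j))"
    using norm_summable by (intro norm_infsum_bound) simp
  also have "\<dots> \<le> (\<Sum>\<^sub>\<infinity>j\<in>UNIV - I. g j)"
    using norm_summable assms(3,4) by (intro infsum_mono) auto
  finally show ?thesis .
qed

lemma gram_tail_summand_le:
  fixes M :: "int \<Rightarrow> int \<Rightarrow> complex"
  assumes "\<beta> \<ge> 0" "c \<ge> 0"
    and decay: "\<And>j k. j \<noteq> k \<Longrightarrow> - j \<noteq> k \<Longrightarrow> cmod (M j k) \<le> c * decay \<beta> a j k / (angle j * angle k)"
    and "int N < \<bar>j\<bar>" "\<bar>l\<bar> \<le> int N" "\<bar>k\<bar> \<le> int N"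
  shows "cmod (cnj (M j l) * M j k)
    \<le> c\<^sup>2 * exp (- \<beta> * \<bar>l - k\<bar>) / ((real N + 1)\<^sup>2 * angle l * angle k) * (decay 0 a l j * decay 0 a j k)"
proof -
  have "cmod (cnj (M j l) * M j k) \<le> (c * decay \<beta> a j l / (angle j * angle l)) * (c * decay \<beta> a j k / (angle j * angle k))"
    unfolding norm_mult complex_mod_cnj using assms decay_pos[of \<beta> a j l] angle_pos[of j] angle_pos[of l]
    by (intro mult_mono decay) auto
  also have "\<dots> = c\<^sup>2 * (decay \<beta> a j l * decay \<beta> a j k) / ((angle j * angle j) * (angle l * angle k))"
    by (simp add: power2_eq_square field_simps)
  also have "\<dots> \<le> c\<^sup>2 * (exp (- \<beta> * \<bar>l - k\<bar>) * (decay 0 a l j * decay 0 a j k)) / ((real N + 1)\<^sup>2 * (angle l * angle k))"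
  proof (intro frac_le mult_left_mono mult_right_mono decay_mult_le_exp)
    show "(real N + 1)\<^sup>2 \<le> angle j * angle j"
      using assms(4) by (simp add: power2_eq_square angle_def mult_mono)
  qed (use assms angle_pos decay_pos in \<open>auto intro!: mult_pos_pos mult_nonneg_nonneg simp: less_imp_le\<close>)
  finally show ?thesis
    by (simp add: field_simps)
qed

lemma truncated_gram_close:
  fixes M :: "int \<Rightarrow> int \<Rightarrow> complex"
  assumes "a > 1" "\<beta> \<ge> 0" "c \<ge> 0" "conv_const a C" "unitary_l2Z M"
    and decay: "\<And>j k. j \<noteq> k \<Longrightarrow> - j \<noteq> k \<Longrightarrow> cmod (M j k) \<le> c * decay \<beta> a j k / (angle j * angle k)"
    and "\<bar>l\<bar> \<le> int N" "\<bar>k\<bar> \<le> int N"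
  shows "cmod ((\<Sum>j\<in>{- int N..int N}. cnj (M j l) * M j k) - (if l = k then 1 else 0))
    \<le> decay_weight (c\<^sup>2 * C) ((real N + 1)\<^sup>2) \<beta> a l k"
proof -
  define K where "K = c\<^sup>2 * exp (- \<beta> * \<bar>l - k\<bar>) / ((real N + 1)\<^sup>2 * angle l * angle k)"
  define g where "g j = K * (decay 0 a l j * decay 0 a j k)" for j
  have K_nonneg: "K \<ge> 0"
    using angle_pos[of l] angle_pos[of k] by (simp add: K_def)
  have g_summable: "g summable_on A" for A
    unfolding g_def using summable_on_decay_product[OF assms(1) order_refl] by (rule summable_on_cmult_right)
  have "cmod ((\<Sum>j\<in>{- int N..int N}. cnj (M j l) * M j k) - (if l = k then 1 else 0))
      \<le> (\<Sum>\<^sub>\<infinity>j\<in>UNIV - {- int N..int N}. g j)"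
  proof (intro unitary_l2Z_gram_tail[OF assms(5)] g_summable)
    fix j assume "j \<notin> {- int N..int N}"
    hence "int N < \<bar>j\<bar>"
      by auto
    thus "cmod (cnj (M j l) * M j k) \<le> g j"
      using gram_tail_summand_le[OF assms(2,3) decay _ assms(7,8)] by (simp add: g_def K_def)
  qed simp
  also have "\<dots> \<le> (\<Sum>\<^sub>\<infinity>j. g j)"
    using K_nonneg decay_pos by (intro infsum_mono_neutral g_summable) (auto simp: g_def less_imp_le)
  also have "\<dots> = K * (\<Sum>\<^sub>\<infinity>j. decay 0 a l j * decay 0 a j k)"
    unfolding g_def by (rule infsum_cmult_right')
  also have "\<dots> \<le> K * (C * decay 0 a l k)"
    using conv_const_decay[OF assms(4)] K_nonneg by (rule mult_left_mono)
  also have "\<dots> = decay_weight (c\<^sup>2 * C) ((real N + 1)\<^sup>2) \<beta> a l k"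
    by (simp add: K_def decay_weight_def decay_eq_exp_mult[of \<beta> a l k] field_simps)
  finally show ?thesis .
qed

lemma truncation_parameter_small:
  assumes "X \<ge> 0" "20 * X \<le> real N"
  shows "real (2 * N + 1) * (X / (real N + 1)\<^sup>2) \<le> 1/10"
proof -
  have "real (2 * N + 1) * X \<le> real (2 * N + 1) * (real N / 20)"
    using assms by (intro mult_left_mono) auto
  also have "\<dots> \<le> (real N + 1)\<^sup>2 / 10"
    by (simp add: power2_eq_square field_simps)
  finally show ?thesis
    by (simp add: field_simps)
qed

lemma truncated_gram_perturbation:
  fixes M :: "int \<Rightarrow> int \<Rightarrow> complex"
  assumes "a > 1" "\<beta> \<ge> 0" "c \<ge> 0" "conv_const a C" "unitary_l2Z M"
    and "\<And>j k. j \<noteq> k \<Longrightarrow> - j \<noteq> k \<Longrightarrow> cmod (M j k) \<le> c * decay \<beta> a j k / (angle j * angle k)"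
    and "20 * (c\<^sup>2 * C) \<le> real N"
  shows "gram_perturbation {- int N..int N} (\<lambda>l k. \<Sum>j\<in>{- int N..int N}. cnj (M j l) * M j k)
    (decay_weight (c\<^sup>2 * C) ((real N + 1)\<^sup>2) \<beta> a)
    (real (2 * N + 1) * (c\<^sup>2 * C / (real N + 1)\<^sup>2)) (c\<^sup>2 * C / (real N + 1)\<^sup>2)"
proof -
  have X: "c\<^sup>2 * C \<ge> 0"
    using conv_const_nonneg[OF assms(1,4)] by simp
  have D: "(real N + 1)\<^sup>2 > 0" and a: "a \<ge> 0" and card: "card {- int N..int N} = 2 * N + 1"
    using assms(1) by simp_all
  have small: "real (2 * N + 1) * (c\<^sup>2 * C / (real N + 1)\<^sup>2) \<le> 1/10"
    using truncation_parameter_small[OF X assms(7)] .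
  have eta_le_delta: "c\<^sup>2 * C / (real N + 1)\<^sup>2 \<le> real (2 * N + 1) * (c\<^sup>2 * C / (real N + 1)\<^sup>2)"
    using mult_right_mono[of 1 "real (2 * N + 1)" "c\<^sup>2 * C / (real N + 1)\<^sup>2"] X by simp
  show ?thesis
  proof
    show "finite {- int N..int N}"
      by simp
    show "(\<Sum>j\<in>{- int N..int N}. cnj (M j m) * M j m') = cnj (\<Sum>j\<in>{- int N..int N}. cnj (M j m') * M j m)"
      for m m'
      by (simp add: cnj_sum mult.commute)
    show "cmod ((\<Sum>j\<in>{- int N..int N}. cnj (M j l) * M j k) - (if l = k then 1 else 0))
        \<le> decay_weight (c\<^sup>2 * C) ((real N + 1)\<^sup>2) \<beta> a l k"
      if "l \<in> {- int N..int N}" "k \<in> {- int N..int N}" for l k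
      by (rule truncated_gram_close[OF assms(1-6)]) (use that in auto)
    show "0 \<le> decay_weight (c\<^sup>2 * C) ((real N + 1)\<^sup>2) \<beta> a l k" for l k
      using X D by (rule decay_weight_nonneg)
    show "decay_weight (c\<^sup>2 * C) ((real N + 1)\<^sup>2) \<beta> a l k = decay_weight (c\<^sup>2 * C) ((real N + 1)\<^sup>2) \<beta> a k l"
      for l k
      by (rule decay_weight_commute)
    show "(\<Sum>m\<in>{- int N..int N}. decay_weight (c\<^sup>2 * C) ((real N + 1)\<^sup>2) \<beta> a m l
          * decay_weight (c\<^sup>2 * C) ((real N + 1)\<^sup>2) \<beta> a m k)
        \<le> real (2 * N + 1) * (c\<^sup>2 * C / (real N + 1)\<^sup>2) * decay_weight (c\<^sup>2 * C) ((real N + 1)\<^sup>2) \<beta> a l k"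
      for l k
      using decay_weight_conv_le[OF X D assms(2) a, where A = "{- int N..int N}"] by (simp only: card)
    show "decay_weight (c\<^sup>2 * C) ((real N + 1)\<^sup>2) \<beta> a k k \<le> c\<^sup>2 * C / (real N + 1)\<^sup>2" for k
      using X D by (rule decay_weight_diag_le)
    show "0 \<le> real (2 * N + 1) * (c\<^sup>2 * C / (real N + 1)\<^sup>2)"
      using X by simp
    show "c\<^sup>2 * C / (real N + 1)\<^sup>2 \<le> 1/10"
      using small eta_le_delta by linarith
  qed (rule small)
qed

lemma le_sum_abs_le:
  fixes f :: "int \<Rightarrow> real"
  assumes "\<And>l. \<bar>l\<bar> \<le> \<bar>k\<bar> \<Longrightarrow> 0 \<le> f l"
  shows "f k \<le> (\<Sum>l\<in>{l. \<bar>l\<bar> \<le> \<bar>k\<bar>}. f l)"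
proof (rule member_le_sum)
  show "finite {l::int. \<bar>l\<bar> \<le> \<bar>k\<bar>}"
    by (rule finite_subset[of _ "{- \<bar>k\<bar>..\<bar>k\<bar>}"]) auto
qed (use assms in auto)

lemma unitary_approximation:
  fixes M :: "int \<Rightarrow> int \<Rightarrow> complex"
  assumes "a > 1" "\<beta> \<ge> 0" "c \<ge> 0" "conv_const a C" "unitary_l2Z M"
    and "\<And>j k. j \<noteq> k \<Longrightarrow> - j \<noteq> k \<Longrightarrow> cmod (M j k) \<le> c * decay \<beta> a j k / (angle j * angle k)"
    and "20 * (c\<^sup>2 * C) \<le> real N"
  defines "\<epsilon> \<equiv> decay_weight (c\<^sup>2 * C) ((real N + 1)\<^sup>2) \<beta> a"
  shows "\<exists>U. unitary_on {- int N..int N} U \<and>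
    (\<forall>j\<in>{- int N..int N}. \<forall>k\<in>{- int N..int N}.
       cmod (U j k - M j k) \<le> 4 * (\<Sum>l\<in>{l. \<bar>l\<bar> \<le> \<bar>k\<bar>}. \<epsilon> l k) * cmod (M j k)
         + (\<Sum>l\<in>{l. - \<bar>k\<bar> \<le> l \<and> l < \<bar>k\<bar> \<and> l \<noteq> k}. 4 * \<epsilon> l k * cmod (M j l)))"
proof -
  define I where "I = {- int N..int N}"
  define G where "G = (\<lambda>l k. \<Sum>j\<in>I. cnj (M j l) * M j k)"
  interpret gram_perturbation I G \<epsilon> "real (2 * N + 1) * (c\<^sup>2 * C / (real N + 1)\<^sup>2)" "c\<^sup>2 * C / (real N + 1)\<^sup>2"
    unfolding I_def G_def \<epsilon>_def by (rule truncated_gram_perturbation[OF assms(1-7)])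
  obtain T where T_admissible: "\<And>k. k \<in> I \<Longrightarrow> admissible_column zigzag T k"
    and T_orthonormal: "\<And>k l. k \<in> I \<Longrightarrow> l \<in> I \<Longrightarrow>
      herm_form I G (\<lambda>m. T m l) (\<lambda>m. T m k) = (if l = k then 1 else 0)"
    using triangular_orthonormalization[OF inj_on_subset[OF inj_zigzag subset_UNIV]] by blast
  define U where "U j k = (\<Sum>m\<in>I. M j m * T m k)" for j k
  have "(\<Sum>j\<in>I. cnj (U j l) * U j k) = herm_form I G (\<lambda>m. T m l) (\<lambda>m. T m k)" for k l
    unfolding U_def G_def by (rule gram_of_product)
  hence "unitary_on I U"
    using finite_I T_orthonormal by (intro unitary_onI) simp_all
  moreover have "cmod (U j k - M j k) \<le> 4 * (\<Sum>l\<in>{l. \<bar>l\<bar> \<le> \<bar>k\<bar>}. \<epsilon> l k) * cmod (M j k)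
      + (\<Sum>l\<in>{l. - \<bar>k\<bar> \<le> l \<and> l < \<bar>k\<bar> \<and> l \<noteq> k}. 4 * \<epsilon> l k * cmod (M j l))"
    if k: "k \<in> I" for j k
  proof -
    have lower: "{m\<in>I. zigzag m < zigzag k} = {l. - \<bar>k\<bar> \<le> l \<and> l < \<bar>k\<bar> \<and> l \<noteq> k}"
      using k by (auto simp: I_def zigzag_less_iff)
    have "\<epsilon> k k \<le> (\<Sum>l\<in>{l. \<bar>l\<bar> \<le> \<bar>k\<bar>}. \<epsilon> l k)"
      using k by (intro le_sum_abs_le eps_nonneg) (auto simp: I_def)
    hence "2 * \<epsilon> k k \<le> 4 * (\<Sum>l\<in>{l. \<bar>l\<bar> \<le> \<bar>k\<bar>}. \<epsilon> l k)"
      using eps_nonneg[OF k k] by linarith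
    hence "2 * \<epsilon> k k * cmod (M j k) \<le> 4 * (\<Sum>l\<in>{l. \<bar>l\<bar> \<le> \<bar>k\<bar>}. \<epsilon> l k) * cmod (M j k)"
      by (rule mult_right_mono) simp
    thus ?thesis
      using admissible_column_correction_le[OF T_admissible[OF k] k, of "M j"] unfolding lower U_def
      by linarith
  qed
  ultimately show ?thesis
    unfolding I_def by blast
qed

theorem mainTheorem11:
  fixes h \<alpha> \<beta> c cst :: real
    and v :: "int \<Rightarrow> real \<Rightarrow> complex"
    and NN :: "int \<Rightarrow> int \<Rightarrow> complex"
  assumes "h > 0" and "\<alpha> > 2" and "\<beta> \<ge> 0" and "c > 0"
    and "potential_setting v"
    and "conv_const (\<alpha> - 1) cst"
    and "unitary_l2Z NN"
    and "\<forall>j k::int.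
      cmod (NN j k
            - (if j = k then exp (2 * pi * of_int k ^ 2 / (\<i> * h)) else 0)
            - (if -j = k then exp (2 * pi * of_int k ^ 2 / (\<i> * h)) / (\<i> * h)
                             * integral {0..2*pi} (v (-2*k)) else 0))
      \<le> c * exp (-\<beta> * \<bar>j-k\<bar>) / (angle j * angle k * angle (j-k) powr (\<alpha> - 1))"
  shows "\<exists>N0::nat. \<forall>N\<ge>N0.
    (let \<epsilon> = (\<lambda>j k::int. c^2 * cst * exp (-\<beta> * \<bar>j-k\<bar>) /
                  (angle j * angle k * (real N + 1)^2 * angle (j-k) powr (\<alpha> - 1)));
         \<sigma> = (\<lambda>k::int. 4 * (\<Sum>l\<in>{l. \<bar>l\<bar> \<le> \<bar>k\<bar>}. \<epsilon> l k))
     in \<exists>U. unitary_on {-int N..int N} U \<and>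
          (\<forall>j\<in>{-int N..int N}. \<forall>k\<in>{-int N..int N}.
             cmod (U j k - NN j k) \<le> \<sigma> k * cmod (NN j k)
               + (\<Sum>l\<in>{l. -\<bar>k\<bar> \<le> l \<and> l < \<bar>k\<bar> \<and> l \<noteq> k}. 4 * \<epsilon> l k * cmod (NN j l))))"
proof -
  have decay: "cmod (NN j k) \<le> c * decay \<beta> (\<alpha> - 1) j k / (angle j * angle k)"
    if "j \<noteq> k" "- j \<noteq> k" for j k
    using assms(8)[rule_format, of j k] that by (simp add: decay_def mult_ac)
  have weight: "c^2 * cst * exp (-\<beta> * \<bar>j-k\<bar>) / (angle j * angle k * (real N + 1)^2 * angle (j-k) powr (\<alpha> - 1))
      = decay_weight (c\<^sup>2 * cst) ((real N + 1)\<^sup>2) \<beta> (\<alpha> - 1) j k" for N :: nat and j k :: int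
    by (simp add: decay_weight_def decay_def mult_ac)
  show ?thesis
    unfolding Let_def weight using assms(2-4,6,7) decay
    by (intro exI[of _ "nat \<lceil>20 * (c\<^sup>2 * cst)\<rceil>"] allI impI unitary_approximation)
       (auto simp: le_nat_iff ceiling_le_iff)
qed

end
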